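(* For a parameter $p\in[1,2]$ with $p\neq 1.5$, Width-2-Johnson's algorithm with parameter $p$ does not achieve an approximation ratio of $3/4$ for weighted max-sat.
   Context: Weighted max-sat: clauses (sets of literals) with nonnegative weights; maximize the total weight of satisfied clauses. Width-2-Johnson's algorithm with parameter $p$ processes the variables $x_1,\dots,x_n$ in the given online order while maintaining two (partial) assignments $A_1,A_2$, initially empty. For a clause $C$ and a partial assignment, the measure $\mu(C)$ is the weight of $C$ times $2^{-l}$, where $l$ is the number of variables of $C$ not yet assigned; for a set of clauses the measure is the sum. When processing $x_i$, for each $D=(d_1,d_2)\in\{0,1\}^2$ let $C_1$ be the set of clauses that become satisfied by assigning $x_i$ to $d_1$ in $A_1$ and $C_2$ the set of clauses that become satisfied by assigning $x_i$ to $d_2$ in $A_2$, and set $f(D)=\mu(C_1\setminus C_2)+\mu(C_2\setminus C_1)+p\,\mu(C_1\cap C_2)$; then $x_i$ is assigned $d_1$ in $A_1$ and $d_2$ in $A_2$ for $D=\arg\max_D f(D)$. At the end the algorithm returns whichever of $A_1,A_2$ satisfies the larger total weight. The approximation ratio is $\inf_I v(\mathbb{A},I)/v(I)$. *)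

theory Defs
  imports Main "HOL.Real"
begin

text \<open>Variables are natural numbers 0,...,n-1, processed in the order 0,1,...,n-1.
  A literal is a pair (v, b): b = True is the positive literal x_v, b = False is its negation.\<close>

type_synonym lit = "nat \<times> bool"
type_synonym wclause = "lit set \<times> real"
type_synonym assignment = "nat \<Rightarrow> bool"

definition wf_instance :: "nat \<Rightarrow> wclause list \<Rightarrow> bool" where
  "wf_instance n cls \<longleftrightarrow>
     (\<forall>(C, w) \<in> set cls. finite C \<and> 0 \<le> w \<and> (\<forall>(v, b) \<in> C. v < n))"

definition sat :: "assignment \<Rightarrow> lit set \<Rightarrow> bool" where
  "sat a C \<longleftrightarrow> (\<exists>(v, b) \<in> C. a v = b)"

definition clause_value :: "wclause list \<Rightarrow> assignment \<Rightarrow> real" where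
  "clause_value cls a = (\<Sum>j<length cls. if sat a (fst (cls ! j)) then snd (cls ! j) else 0)"

text \<open>Partial assignment: only variables < k are assigned (by a).\<close>
definition sat_upto :: "nat \<Rightarrow> assignment \<Rightarrow> lit set \<Rightarrow> bool" where
  "sat_upto k a C \<longleftrightarrow> (\<exists>(v, b) \<in> C. v < k \<and> a v = b)"

definition becomes_sat :: "nat \<Rightarrow> assignment \<Rightarrow> bool \<Rightarrow> lit set \<Rightarrow> bool" where
  "becomes_sat k a d C \<longleftrightarrow> \<not> sat_upto k a C \<and> (k, d) \<in> C"

definition mu :: "nat \<Rightarrow> wclause \<Rightarrow> real" where
  "mu k c = snd c * (1/2) ^ card {v. v \<ge> k \<and> (\<exists>b. (v, b) \<in> fst c)}"

definition f_val :: "real \<Rightarrow> wclause list \<Rightarrow> nat \<Rightarrow> assignment \<Rightarrow> assignment \<Rightarrow> bool \<times> bool \<Rightarrow> real" where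
  "f_val p cls k A1 A2 D =
     (\<Sum>j<length cls.
        let c = cls ! j;
            s1 = becomes_sat k A1 (fst D) (fst c);
            s2 = becomes_sat k A2 (snd D) (fst c)
        in (if s1 \<and> \<not> s2 then mu k c else 0)
         + (if s2 \<and> \<not> s1 then mu k c else 0)
         + (if s1 \<and> s2 then p * mu k c else 0))"

text \<open>A selection rule (resolving ties arbitrarily, possibly depending on the whole
  instance and state) is admissible if it always returns a maximiser of f.\<close>
type_synonym selector =
  "nat \<Rightarrow> wclause list \<Rightarrow> nat \<Rightarrow> assignment \<Rightarrow> assignment \<Rightarrow> bool \<times> bool"

definition valid_selector :: "real \<Rightarrow> selector \<Rightarrow> bool" where
  "valid_selector p sel \<longleftrightarrow>
     (\<forall>n cls k A1 A2 D. f_val p cls k A1 A2 D \<le> f_val p cls k A1 A2 (sel n cls k A1 A2))"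

text \<open>State after processing variables 0,...,k-1 (values at variables \<ge> k are irrelevant).\<close>
fun w2j_run :: "selector \<Rightarrow> nat \<Rightarrow> wclause list \<Rightarrow> nat \<Rightarrow> assignment \<times> assignment" where
  "w2j_run sel n cls 0 = (\<lambda>_. False, \<lambda>_. False)"
| "w2j_run sel n cls (Suc k) =
     (let (A1, A2) = w2j_run sel n cls k;
          D = sel n cls k A1 A2
      in (A1(k := fst D), A2(k := snd D)))"

definition w2j_value :: "selector \<Rightarrow> nat \<Rightarrow> wclause list \<Rightarrow> real" where
  "w2j_value sel n cls =
     (let (A1, A2) = w2j_run sel n cls n
      in max (clause_value cls A1) (clause_value cls A2))"

end

theory Submission
  imports Defs
begin

text \<open>Two instances on the variables x0, x1 suffice, one for each side of p = 3/2.
  For p < 3/2 the weights are tuned so that f forces the two copies to disagree on x0 and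
  then to copy x0 into x1; both resulting assignments have value 3/2, while setting x0 true
  and x1 false gains the extra clause x0 \<or> \<not>x1. For p > 3/2 the bonus p for
  clauses satisfied by both copies makes f set x0 false in both copies, after which
  x1 no longer matters, while the all-true assignment is better by more than a factor 4/3.
  At p = 3/2 both constructions degenerate into ties.\<close>

lemma mu_eq_card_vars: "mu k (C, w) = w * (1/2) ^ card (fst ` C \<inter> {k..})"
proof -
  have "{v. k \<le> v \<and> (\<exists>b. (v, b) \<in> C)} = fst ` C \<inter> {k..}" by force
  thus ?thesis by (simp add: mu_def)
qed

lemma f_val_swap: "f_val p cls k A1 A2 (d1, d2) = f_val p cls k A2 A1 (d2, d1)"
  unfolding f_val_def Let_def by (intro sum.cong) auto

lemma valid_selector_avoids_dominated:
  assumes "valid_selector p sel" and "f_val p cls k A1 A2 D < f_val p cls k A1 A2 D'"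
  shows "sel n cls k A1 A2 \<noteq> D"
  using assms unfolding valid_selector_def by (metis not_le)

lemma valid_selector_picks_strict_max:
  assumes "valid_selector p sel" and "\<And>D'. D' \<noteq> D \<Longrightarrow> f_val p cls k A1 A2 D' < f_val p cls k A1 A2 D"
  shows "sel n cls k A1 A2 = D"
  using valid_selector_avoids_dominated[OF assms(1) assms(2)] by blast

lemma w2j_run_2:
  "w2j_run sel n cls 2 =
     (let D0 = sel n cls 0 (\<lambda>_. False) (\<lambda>_. False);
          A1 = (\<lambda>_. False)(0 := fst D0); A2 = (\<lambda>_. False)(0 := snd D0);
          D1 = sel n cls 1 A1 A2
      in (A1(1 := fst D1), A2(1 := snd D1)))"
  by (simp add: numeral_2_eq_2 split_def Let_def)

lemmas f_val_simps = f_val_def becomes_sat_def sat_upto_def mu_eq_card_vars Int_insert_left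
  lessThan_Suc numeral_eq_Suc Let_def

definition low_instance :: "real \<Rightarrow> wclause list" where
  "low_instance p =
     [({(0, True)}, 1), ({(0, False)}, (2*p - 1)/4), ({(1, False)}, 1), ({(1, True)}, (2*p - 1)/4),
      ({(0, True), (1, False)}, (3 - 2*p)/4)]"

definition high_instance :: "real \<Rightarrow> wclause list" where
  "high_instance p =
     [({(1, True)}, (2*p - 1)/4), ({(0, False), (1, True)}, 1), ({(0, True), (1, False)}, (2*p - 1)/4)]"

lemma wf_low_instance: "1/2 \<le> p \<Longrightarrow> p \<le> 3/2 \<Longrightarrow> wf_instance 2 (low_instance p)"
  by (simp add: wf_instance_def low_instance_def)

lemma wf_high_instance: "1/2 \<le> p \<Longrightarrow> wf_instance 2 (high_instance p)"
  by (simp add: wf_instance_def high_instance_def)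

lemma f_val_low_instance_0:
  "f_val p (low_instance p) 0 A1 A2 (True, True) = (11*p - 2*p^2)/16"
  "f_val p (low_instance p) 0 A1 A2 (False, False) = (2*p^2 - p)/8"
  "f_val p (low_instance p) 0 A1 A2 (True, False) = (9 + 2*p)/16"
  "f_val p (low_instance p) 0 A1 A2 (False, True) = (9 + 2*p)/16"
  by (simp_all add: low_instance_def f_val_simps power2_eq_square field_simps)

lemma f_val_low_instance_1:
  assumes "A1 0" "\<not> A2 0"
  shows "f_val p (low_instance p) 1 A1 A2 (True, True) = (2*p^2 - p)/8"
    "f_val p (low_instance p) 1 A1 A2 (False, False) = (2*p + 3)/8"
    "f_val p (low_instance p) 1 A1 A2 (True, False) = 3/4"
    "f_val p (low_instance p) 1 A1 A2 (False, True) = (2*p + 3)/8"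
  using assms by (simp_all add: low_instance_def f_val_simps power2_eq_square field_simps)

lemma f_val_high_instance_0:
  "f_val p (high_instance p) 0 A1 A2 (True, True) = (2*p^2 - p)/16"
  "f_val p (high_instance p) 0 A1 A2 (False, False) = p/4"
  "f_val p (high_instance p) 0 A1 A2 (True, False) = (2*p + 3)/16"
  "f_val p (high_instance p) 0 A1 A2 (False, True) = (2*p + 3)/16"
  by (simp_all add: high_instance_def f_val_simps power2_eq_square field_simps)

lemma clause_value_low_instance:
  "clause_value (low_instance p) a =
     (if a 0 then 1 else (2*p - 1)/4) + (if a 1 then (2*p - 1)/4 else 1)
     + (if a 0 \<or> \<not> a 1 then (3 - 2*p)/4 else 0)"
  by (simp add: clause_value_def sat_def low_instance_def lessThan_Suc numeral_eq_Suc)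

lemma clause_value_high_instance:
  "clause_value (high_instance p) a =
     (if a 1 then (2*p - 1)/4 else 0) + (if \<not> a 0 \<or> a 1 then 1 else 0)
     + (if a 0 \<or> \<not> a 1 then (2*p - 1)/4 else 0)"
  by (simp add: clause_value_def sat_def high_instance_def lessThan_Suc numeral_eq_Suc)

lemma low_instance_step0_splits:
  assumes "valid_selector p sel" "1 \<le> p" "p < 3/2"
  shows "fst (sel n (low_instance p) 0 A1 A2) \<noteq> snd (sel n (low_instance p) 0 A1 A2)"
proof -
  \<comment> \<open>(2p - 3)(p - 3)/16 is the advantage of splitting over setting x0 true in both copies\<close>
  have "0 < (3 - 2*p) * (3 - p)" using assms by (intro mult_pos_pos) auto
  moreover have "p^2 \<le> 2*p" using assms by (simp add: power2_eq_square)
  ultimately have "f_val p (low_instance p) 0 A1 A2 (d, d) < f_val p (low_instance p) 0 A1 A2 (True, False)"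
    for d
    by (cases d) (auto simp: f_val_low_instance_0 algebra_simps power2_eq_square)
  then have "sel n (low_instance p) 0 A1 A2 \<noteq> (d, d)" for d
    using valid_selector_avoids_dominated[OF assms(1)] by blast
  then show ?thesis
    by (cases "sel n (low_instance p) 0 A1 A2") auto
qed

lemma low_instance_step1_copies:
  assumes "valid_selector p sel" "1 \<le> p" "p < 3/2" and "A1 0 \<noteq> A2 0"
  shows "sel n (low_instance p) 1 A1 A2 = (A1 0, A2 0)"
proof -
  have "p^2 \<le> 2*p" using assms by (simp add: power2_eq_square)
  \<comment> \<open>One_nat_def is dropped so that simp keeps the step index 1 that the f-value lemmas mention\<close>
  have best: "f_val p (low_instance p) 1 B1 B2 D < f_val p (low_instance p) 1 B1 B2 (True, False)"
    if "B1 0" "\<not> B2 0" "D \<noteq> (True, False)" for B1 B2 D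
    using that \<open>p^2 \<le> 2*p\<close> \<open>p < 3/2\<close>
    by (cases D; cases "fst D"; cases "snd D") (auto simp del: One_nat_def simp: f_val_low_instance_1)
  show ?thesis
  proof (rule valid_selector_picks_strict_max[OF assms(1)])
    fix D assume "D \<noteq> (A1 0, A2 0)"
    then show "f_val p (low_instance p) 1 A1 A2 D < f_val p (low_instance p) 1 A1 A2 (A1 0, A2 0)"
      using assms(4) best[of A1 A2 D] best[of A2 A1 "prod.swap D"]
      by (cases D) (auto simp del: One_nat_def simp: f_val_swap[of p _ 1 A1 A2])
  qed
qed

lemma high_instance_step0:
  assumes "valid_selector p sel" "3/2 < p" "p \<le> 2"
  shows "sel n (high_instance p) 0 A1 A2 = (False, False)"
proof (rule valid_selector_picks_strict_max[OF assms(1)])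
  have "p^2 \<le> 2*p" using assms by (simp add: power2_eq_square)
  fix D :: "bool \<times> bool" assume "D \<noteq> (False, False)"
  with \<open>p^2 \<le> 2*p\<close> assms(2) show "f_val p (high_instance p) 0 A1 A2 D < f_val p (high_instance p) 0 A1 A2 (False, False)"
    by (cases D; cases "fst D"; cases "snd D") (auto simp: f_val_high_instance_0)
qed

lemma w2j_value_low_instance:
  assumes "valid_selector p sel" "1 \<le> p" "p < 3/2"
  shows "w2j_value sel 2 (low_instance p) = 3/2"
proof -
  define D0 where "D0 = sel 2 (low_instance p) 0 (\<lambda>_. False) (\<lambda>_. False)"
  define A1 where "A1 = (\<lambda>_::nat. False)(0 := fst D0)"
  define A2 where "A2 = (\<lambda>_::nat. False)(0 := snd D0)"
  have "A1 0 \<noteq> A2 0"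
    using low_instance_step0_splits[OF assms] by (simp add: A1_def A2_def D0_def)
  then have "sel 2 (low_instance p) 1 A1 A2 = (A1 0, A2 0)"
    using low_instance_step1_copies assms by blast
  then have "w2j_run sel 2 (low_instance p) 2 = (A1(1 := A1 0), A2(1 := A2 0))"
    by (simp add: w2j_run_2 Let_def A1_def A2_def D0_def)
  then show ?thesis
    by (simp add: w2j_value_def clause_value_low_instance field_simps)
qed

lemma w2j_value_high_instance:
  assumes "valid_selector p sel" "3/2 < p" "p \<le> 2"
  shows "w2j_value sel 2 (high_instance p) = (2*p + 3)/4"
proof -
  have "\<not> fst (w2j_run sel 2 (high_instance p) 2) 0" "\<not> snd (w2j_run sel 2 (high_instance p) 2) 0"
    using high_instance_step0[OF assms] by (simp_all add: w2j_run_2 Let_def)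
  then show ?thesis
    by (simp add: w2j_value_def split_def Let_def clause_value_high_instance field_simps)
qed

theorem lemma3:
  fixes p :: real
  assumes "1 \<le> p" and "p \<le> 2" and "p \<noteq> 3/2"
  shows "\<forall>sel. valid_selector p sel \<longrightarrow>
           (\<exists>n cls a. wf_instance n cls \<and> w2j_value sel n cls < 3/4 * clause_value cls a)"
proof (intro allI impI)
  fix sel assume sel: "valid_selector p sel"
  show "\<exists>n cls a. wf_instance n cls \<and> w2j_value sel n cls < 3/4 * clause_value cls a"
  proof (cases "p < 3/2")
    case True
    have "w2j_value sel 2 (low_instance p) < 3/4 * clause_value (low_instance p) (\<lambda>v. v = 0)"
      using True by (simp add: w2j_value_low_instance[OF sel assms(1) True] clause_value_low_instance)
    moreover have "wf_instance 2 (low_instance p)" using True assms(1) by (simp add: wf_low_instance)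
    ultimately show ?thesis by blast
  next
    case False
    with assms(3) have "3/2 < p" by simp
    have "w2j_value sel 2 (high_instance p) < 3/4 * clause_value (high_instance p) (\<lambda>_. True)"
      using \<open>3/2 < p\<close> by (simp add: w2j_value_high_instance[OF sel \<open>3/2 < p\<close> assms(2)] clause_value_high_instance)
    moreover have "wf_instance 2 (high_instance p)" using \<open>3/2 < p\<close> by (simp add: wf_high_instance)
    ultimately show ?thesis by blast
  qed
qed

end
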